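(* Let $n\ge 2$ and let $f(x)=\sum_{i=0}^n a_i x^i$ be a polynomial with complex coefficients and $a_n\neq 0$. Write $f(x)=a_n(x+x_1)(x+x_2)\cdots(x+x_n)$ with $x_1,\dots,x_n\in\mathbb{C}$, taken in any order. Define the characteristic roots $b_1,\dots,b_{n-1}$ by the relations $x_i=x_{i-1}+\sum_{j=1}^{i-1}b_j$ for $i=2,\dots,n$. Let $B_n=(b_1,\dots,b_{n-1})^T$, and let $H_n=(h_{ij})_{1\le i,j\le n-1}$ be the symmetric matrix whose entries for $i\ge j$ are $$h_{ij}=\frac{1}{6}\Big(ni^3-\tfrac{3}{2}n(n+1)i^2+\tfrac{1}{2}n(3n+1)i+\tfrac{1}{2}(n^4-n^2)\Big)-\frac{1}{4}\big(i^2-(2n+1)i+n(n+1)\big)(j-1)j,$$ and $h_{ij}=h_{ji}$ for $i<j$. Then the characteristic discriminant $D_n=(n-1)!^2a_{n-1}^2-2\,n!\,(n-2)!\,a_na_{n-2}$ satisfies $$D_n=(n-1)!\,(n-2)!\,a_n^2\,B_n^TH_nB_n,$$ equivalently $B_n^TH_nB_n=\dfrac{1}{a_n^2}\big((n-1)a_{n-1}^2-2na_na_{n-2}\big)$. In particular, $H_n$ has constant positive integer entries depending only on $n$.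
   Context: The numbers $-x_1,\dots,-x_n$ are the roots of $f$ listed with multiplicity. The defining relations are equivalent to $b_1=x_2-x_1$ and $b_j=x_{j+1}-2x_j+x_{j-1}$ for $2\le j\le n-1$. For $n=2$ the matrix $H_2=[1]$. *)

theory Defs
  imports Complex_Main "HOL-Computational_Algebra.Polynomial"
begin

definition H_low :: "nat \<Rightarrow> nat \<Rightarrow> nat \<Rightarrow> real" where
  "H_low n i j =
     (1/6) * (real n * real i ^ 3 - (3/2) * real n * (real n + 1) * real i ^ 2
              + (1/2) * real n * (3 * real n + 1) * real i + (1/2) * (real n ^ 4 - real n ^ 2))
     - (1/4) * (real i ^ 2 - (2 * real n + 1) * real i + real n * (real n + 1)) * ((real j - 1) * real j)"

definition H_mat :: "nat \<Rightarrow> nat \<Rightarrow> nat \<Rightarrow> real" where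
  "H_mat n i j = (if j \<le> i then H_low n i j else H_low n j i)"

definition char_disc :: "nat \<Rightarrow> complex poly \<Rightarrow> complex" where
  "char_disc n f = (fact (n - 1))^2 * (coeff f (n - 1))^2
     - 2 * fact n * fact (n - 2) * coeff f n * coeff f (n - 2)"

text \<open>Quadratic form B^T H_n B (plain transpose, no conjugation).\<close>
definition quad_H :: "nat \<Rightarrow> (nat \<Rightarrow> complex) \<Rightarrow> complex" where
  "quad_H n b = (\<Sum>i=1..n-1. \<Sum>j=1..n-1. b i * complex_of_real (H_mat n i j) * b j)"

end

theory Submission
  imports Defs
begin

(*
  By Vieta, a_{n-1} = a_n e_1 and 2 a_{n-2} = a_n (e_1^2 - p_2) for the elementary and power
  sums e_1 = sum x_k, p_2 = sum x_k^2, so D_n = (n-1)! (n-2)! a_n^2 (n p_2 - e_1^2).  The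
  dispersion n p_2 - e_1^2 is invariant under translating all roots, and the relations
  defining the b_j give x_k - x_1 = sum_j (k-j)^+ b_j.  Hence the dispersion is a quadratic
  form in b with entries n sum_k c_ki c_kj - (sum_k c_ki)(sum_k c_kj), c_ki = (k-i)^+; summing
  these power sums in closed form gives exactly h_ij, which is then visibly an integer, and
  visibly positive once written as a polynomial in n - i, i - j and j.
*)

definition dispersion :: "'b set \<Rightarrow> ('b \<Rightarrow> 'a::comm_ring_1) \<Rightarrow> 'a" where
  "dispersion K y = of_nat (card K) * (\<Sum>k\<in>K. y k ^ 2) - (\<Sum>k\<in>K. y k) ^ 2"

lemma dispersion_cong: "(\<And>k. k \<in> K \<Longrightarrow> y k = z k) \<Longrightarrow> dispersion K y = dispersion K z"
  unfolding dispersion_def by (simp cong: sum.cong)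

lemma dispersion_shift: "dispersion K (\<lambda>k. y k - c) = dispersion K y"
  unfolding dispersion_def
  by (simp add: power2_eq_square algebra_simps sum.distrib sum_subtractf sum_distrib_left
      sum_distrib_right)

lemma dispersion_linear_combination:
  fixes C :: "'b \<Rightarrow> 'c \<Rightarrow> 'a::comm_ring_1"
  shows "dispersion K (\<lambda>k. \<Sum>i\<in>I. C k i * b i) =
    (\<Sum>i\<in>I. \<Sum>j\<in>I. b i * (of_nat (card K) * (\<Sum>k\<in>K. C k i * C k j)
                          - (\<Sum>k\<in>K. C k i) * (\<Sum>k\<in>K. C k j)) * b j)"
proof -
  have "(\<Sum>k\<in>K. (\<Sum>i\<in>I. C k i * b i) ^ 2) = (\<Sum>k\<in>K. \<Sum>i\<in>I. \<Sum>j\<in>I. C k i * b i * (C k j * b j))"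
    by (simp add: power2_eq_square sum_product)
  also have "\<dots> = (\<Sum>i\<in>I. \<Sum>j\<in>I. \<Sum>k\<in>K. C k i * b i * (C k j * b j))"
    by (subst sum.swap) (simp add: sum.swap[of _ K])
  also have "\<dots> = (\<Sum>i\<in>I. \<Sum>j\<in>I. b i * (\<Sum>k\<in>K. C k i * C k j) * b j)"
    by (simp add: sum_distrib_left sum_distrib_right mult_ac)
  finally have squares: "(\<Sum>k\<in>K. (\<Sum>i\<in>I. C k i * b i) ^ 2) =
      (\<Sum>i\<in>I. \<Sum>j\<in>I. b i * (\<Sum>k\<in>K. C k i * C k j) * b j)" .
  have "(\<Sum>k\<in>K. \<Sum>i\<in>I. C k i * b i) = (\<Sum>i\<in>I. b i * (\<Sum>k\<in>K. C k i))"
    by (subst sum.swap) (simp add: sum_distrib_left mult_ac)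
  then have square_of_sum: "(\<Sum>k\<in>K. \<Sum>i\<in>I. C k i * b i) ^ 2 =
      (\<Sum>i\<in>I. \<Sum>j\<in>I. b i * ((\<Sum>k\<in>K. C k i) * (\<Sum>k\<in>K. C k j)) * b j)"
    by (simp add: power2_eq_square sum_product mult_ac)
  show ?thesis
    unfolding dispersion_def squares square_of_sum
    by (simp add: sum_distrib_left sum_subtractf[symmetric] algebra_simps)
qed

lemma prod_linear_Suc:
  "(\<Prod>i=1..Suc m. [:x i, 1:]) =
    smult (x (Suc m)) (\<Prod>i=1..m. [:x i, 1:]) + pCons 0 (\<Prod>i=1..m. [:x i, 1::'a::comm_ring_1:])"
  by (simp add: mult.commute[of _ "[:_, 1:]"] mult_pCons_left)

lemma degree_prod_linear_le: "degree (\<Prod>i=1..m. [:x i, 1::'a::comm_ring_1:]) \<le> m"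
  by (rule order.trans[OF degree_prod_sum_le]) auto

lemma coeff_prod_linear_Suc:
  "coeff (\<Prod>i=1..Suc m. [:x i, 1::'a::comm_ring_1:]) (Suc k) =
    x (Suc m) * coeff (\<Prod>i=1..m. [:x i, 1:]) (Suc k) + coeff (\<Prod>i=1..m. [:x i, 1:]) k"
  unfolding prod_linear_Suc by simp

lemma coeff_prod_linear_top: "coeff (\<Prod>i=1..m. [:x i, 1::'a::comm_ring_1:]) m = 1"
proof (induction m)
  case (Suc m)
  have "coeff (\<Prod>i=1..m. [:x i, 1:]) (Suc m) = 0"
    using degree_prod_linear_le[of x m] by (simp add: coeff_eq_0)
  then show ?case
    unfolding coeff_prod_linear_Suc using Suc by simp
qed simp

lemma coeff_prod_linear_sum:
  "coeff (\<Prod>i=1..Suc m. [:x i, 1::'a::comm_ring_1:]) m = (\<Sum>i=1..Suc m. x i)"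
proof (induction m)
  case (Suc m)
  then show ?case
    unfolding coeff_prod_linear_Suc using coeff_prod_linear_top[of x "Suc m"] by simp
qed simp

lemma coeff_prod_linear_sum_pairs:
  "2 * coeff (\<Prod>i=1..Suc (Suc m). [:x i, 1::'a::comm_ring_1:]) m =
    (\<Sum>i=1..Suc (Suc m). x i) ^ 2 - (\<Sum>i=1..Suc (Suc m). x i ^ 2)"
proof (induction m)
  case 0
  show ?case
    by (simp add: numeral_2_eq_2 power2_eq_square algebra_simps)
next
  case (Suc m)
  then show ?case
    unfolding coeff_prod_linear_Suc using coeff_prod_linear_sum[of x "Suc m"]
    by (simp add: power2_eq_square algebra_simps)
qed

lemma char_disc_prod_linear:
  fixes x :: "nat \<Rightarrow> complex"
  assumes "n \<ge> 2" and f: "f = smult a (\<Prod>i=1..n. [:x i, 1:])"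
  shows "char_disc n f = fact (n - 1) * fact (n - 2) * a ^ 2 * dispersion {1..n} x"
proof -
  obtain m where n: "n = Suc (Suc m)"
    using assms(1) by (metis add_2_eq_Suc le_Suc_ex)
  let ?e1 = "\<Sum>i=1..n. x i" and ?p2 = "\<Sum>i=1..n. x i ^ 2"
  have top: "coeff f n = a"
    unfolding f coeff_smult coeff_prod_linear_top by simp
  have sub1: "coeff f (n - 1) = a * ?e1"
    using coeff_prod_linear_sum[of x "Suc m"] by (simp add: f n)
  have sub2: "2 * coeff f (n - 2) = a * (?e1 ^ 2 - ?p2)"
    using coeff_prod_linear_sum_pairs[of x m] by (simp add: f n)
  have "char_disc n f = fact (n - 1) ^ 2 * (a * ?e1) ^ 2
      - fact n * fact (n - 2) * a * (2 * coeff f (n - 2))"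
    unfolding char_disc_def top sub1 by (simp add: algebra_simps)
  also have "\<dots> = fact (n - 1) * fact (n - 2) * a ^ 2 * (of_nat n * ?p2 - ?e1 ^ 2)"
  proof -
    have "(fact n :: complex) = of_nat n * fact (n - 1)"
      using assms(1) by (simp add: fact_reduce)
    moreover have "(fact (n - 1) :: complex) = (of_nat n - 1) * fact (n - 2)"
      using assms(1) fact_reduce[of "n - 1", where 'a = complex] by (simp add: n)
    ultimately show ?thesis
      unfolding sub2 by algebra
  qed
  finally show ?thesis
    by (simp add: dispersion_def)
qed

text \<open>Truncated subtraction on \<^typ>\<open>nat\<close> makes \<open>k - j\<close> the ramp \<open>(k - j)\<^sup>+\<close>.\<close>

lemma root_offset_ramp_sum:
  fixes x b :: "nat \<Rightarrow> 'a::comm_ring_1"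
  assumes rel: "\<forall>i\<in>{2..n}. x i = x (i - 1) + (\<Sum>j=1..i-1. b j)"
    and "1 \<le> k" "k \<le> n"
  shows "x k = x 1 + (\<Sum>j=1..n-1. of_nat (k - j) * b j)"
  using assms(2,3)
proof (induction k rule: dec_induct)
  case base
  show ?case by simp
next
  case (step k)
  have ramp_Suc: "of_nat (Suc k - j) * b j = of_nat (k - j) * b j + (if j \<le> k then b j else 0)"
    for j
    by (simp add: Suc_diff_le algebra_simps)
  have "(\<Sum>j=1..n-1. if j \<le> k then b j else 0) = (\<Sum>j\<in>{1..n-1} \<inter> {j. j \<le> k}. b j)"
    by (simp add: sum.inter_restrict)
  also have "{1..n-1} \<inter> {j. j \<le> k} = {1..k}"
    using step.prems by auto
  finally have "(\<Sum>j=1..n-1. of_nat (Suc k - j) * b j) =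
      (\<Sum>j=1..n-1. of_nat (k - j) * b j) + (\<Sum>j=1..k. b j)"
    by (simp add: ramp_Suc sum.distrib)
  moreover have "x (Suc k) = x k + (\<Sum>j=1..k. b j)"
    using rel step.hyps step.prems by auto
  ultimately show ?case
    using step by (simp add: algebra_simps)
qed

definition ramp_gram :: "nat \<Rightarrow> nat \<Rightarrow> nat \<Rightarrow> real" where
  "ramp_gram n i j = real n * (\<Sum>k=1..n. real (k - i) * real (k - j))
     - (\<Sum>k=1..n. real (k - i)) * (\<Sum>k=1..n. real (k - j))"

lemma ramp_gram_sym: "ramp_gram n i j = ramp_gram n j i"
  unfolding ramp_gram_def by (simp add: mult.commute)

lemma ramp_gram_Ints: "ramp_gram n i j \<in> \<int>"
  unfolding ramp_gram_def by (intro Ints_diff Ints_mult Ints_sum Ints_of_nat)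

lemma sum_ramp:
  assumes "i \<le> n"
  shows "(\<Sum>k=1..n. real (k - i)) = real (n - i) * (real (n - i) + 1) / 2"
  using assms
proof (induction n rule: dec_induct)
  case (step n)
  then show ?case by (simp add: Suc_diff_le field_simps)
qed simp

lemma sum_ramp_mult:
  assumes "j \<le> i" "i \<le> n"
  shows "(\<Sum>k=1..n. real (k - i) * real (k - j)) =
    real (n - i) * (real (n - i) + 1) * (2 * real (n - i) + 1) / 6
    + real (i - j) * real (n - i) * (real (n - i) + 1) / 2"
  using assms(2)
proof (induction n rule: dec_induct)
  case (step n)
  then show ?case using assms(1) by (simp add: Suc_diff_le of_nat_diff field_simps)
qed simp

lemma H_low_eq_ramp_gram:
  assumes "j \<le> i" "i \<le> n"
  shows "H_low n i j = ramp_gram n i j"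
proof -
  have closed_forms:
    "(\<Sum>k=1..n. real (k - i) * real (k - j)) =
       (real n - real i) * (real n - real i + 1) * (2 * (real n - real i) + 1) / 6
       + (real i - real j) * (real n - real i) * (real n - real i + 1) / 2"
    "(\<Sum>k=1..n. real (k - i)) = (real n - real i) * (real n - real i + 1) / 2"
    "(\<Sum>k=1..n. real (k - j)) = (real n - real j) * (real n - real j + 1) / 2"
    using sum_ramp_mult[OF assms] sum_ramp[of i n] sum_ramp[of j n] assms
    by (simp_all add: of_nat_diff)
  show ?thesis
    unfolding ramp_gram_def closed_forms H_low_def
    by (simp add: field_simps power2_eq_square power3_eq_cube power4_eq_xxxx)
qed

lemma H_mat_eq_ramp_gram:
  assumes "i \<le> n" "j \<le> n"
  shows "H_mat n i j = ramp_gram n i j"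
  using assms H_low_eq_ramp_gram[of j i n] H_low_eq_ramp_gram[of i j n] ramp_gram_sym[of n i j]
  unfolding H_mat_def by auto

lemma H_low_pos:
  assumes "1 \<le> j" "j \<le> i" "i < n"
  shows "H_low n i j > 0"
proof -
  define M D J where "M = real n - real i" and "D = real i - real j" and "J = real j"
  have M: "M \<ge> 1" and D: "D \<ge> 0" and J: "J \<ge> 1"
    using assms by (auto simp: M_def D_def J_def)
  have "real n = J + D + M" "real i = J + D"
    by (simp_all add: M_def D_def J_def)
  then have "H_low n i j = M * (M + 1) / 2 * ((M ^ 2 - M) / 6 + J * (2 * M + 1) / 3)
      + D * (M * (M + 1) * (2 * M + 1) / 6 + M * (M + 1) / 2 * (J - 1 / 2))
      + D ^ 2 * (M * (M + 1) / 2) / 2"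
    unfolding H_low_def J_def[symmetric]
    by (simp add: field_simps power2_eq_square power3_eq_cube power4_eq_xxxx)
  moreover have "M * (M + 1) / 2 * ((M ^ 2 - M) / 6 + J * (2 * M + 1) / 3) > 0"
  proof (intro mult_pos_pos add_nonneg_pos)
    show "(M ^ 2 - M) / 6 \<ge> 0"
      using M by (simp add: power2_eq_square)
  qed (use M J in auto)
  moreover have "D * (M * (M + 1) * (2 * M + 1) / 6 + M * (M + 1) / 2 * (J - 1 / 2)) \<ge> 0"
    using M D J by (intro mult_nonneg_nonneg add_nonneg_nonneg) auto
  moreover have "D ^ 2 * (M * (M + 1) / 2) / 2 \<ge> 0"
    using M by simp
  ultimately show ?thesis
    by linarith
qed

lemma H_mat_pos:
  assumes "i \<in> {1..n-1}" "j \<in> {1..n-1}"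
  shows "H_mat n i j > 0"
  using assms H_low_pos[of j i n] H_low_pos[of i j n] unfolding H_mat_def by auto

lemma quad_H_eq_dispersion:
  fixes x b :: "nat \<Rightarrow> complex"
  assumes rel: "\<forall>i\<in>{2..n}. x i = x (i - 1) + (\<Sum>j=1..i-1. b j)"
  shows "quad_H n b = dispersion {1..n} x"
proof -
  let ?C = "\<lambda>k j. of_nat (k - j) :: complex"
  have "quad_H n b = (\<Sum>i=1..n-1. \<Sum>j=1..n-1. b i * (of_nat (card {1..n}) *
      (\<Sum>k=1..n. ?C k i * ?C k j) - (\<Sum>k=1..n. ?C k i) * (\<Sum>k=1..n. ?C k j)) * b j)"
    unfolding quad_H_def
  proof (intro sum.cong refl)
    fix i j
    assume "i \<in> {1..n-1}" "j \<in> {1..n-1}"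
    then have "H_mat n i j = ramp_gram n i j"
      by (intro H_mat_eq_ramp_gram) auto
    then show "b i * complex_of_real (H_mat n i j) * b j = b i * (of_nat (card {1..n}) *
        (\<Sum>k=1..n. ?C k i * ?C k j) - (\<Sum>k=1..n. ?C k i) * (\<Sum>k=1..n. ?C k j)) * b j"
      by (simp add: ramp_gram_def)
  qed
  also have "\<dots> = dispersion {1..n} (\<lambda>k. \<Sum>j=1..n-1. ?C k j * b j)"
    by (rule dispersion_linear_combination[symmetric])
  also have "\<dots> = dispersion {1..n} (\<lambda>k. x k - x 1)"
  proof (rule dispersion_cong)
    fix k
    assume "k \<in> {1..n}"
    then show "(\<Sum>j=1..n-1. ?C k j * b j) = x k - x 1"
      using root_offset_ramp_sum[OF rel, of k] by simp
  qed
  also have "\<dots> = dispersion {1..n} x"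
    by (rule dispersion_shift)
  finally show ?thesis .
qed

theorem mainTheorem1:
  fixes n :: nat and f :: "complex poly" and x b :: "nat \<Rightarrow> complex"
  assumes n2: "n \<ge> 2"
    and deg: "degree f = n"
    and an: "coeff f n \<noteq> 0"
    and roots: "f = smult (coeff f n) (\<Prod>i=1..n. [:x i, 1:])"
    and brel: "\<forall>i\<in>{2..n}. x i = x (i - 1) + (\<Sum>j=1..i-1. b j)"
  shows "char_disc n f = fact (n - 1) * fact (n - 2) * (coeff f n)^2 * quad_H n b
         \<and> (\<forall>i\<in>{1..n-1}. \<forall>j\<in>{1..n-1}. H_mat n i j \<in> \<int> \<and> H_mat n i j > 0)"
proof
  show "char_disc n f = fact (n - 1) * fact (n - 2) * (coeff f n)^2 * quad_H n b"
    unfolding char_disc_prod_linear[OF n2 roots] quad_H_eq_dispersion[OF brel] ..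
  show "\<forall>i\<in>{1..n-1}. \<forall>j\<in>{1..n-1}. H_mat n i j \<in> \<int> \<and> H_mat n i j > 0"
    using H_mat_eq_ramp_gram ramp_gram_Ints H_mat_pos by auto
qed

end
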